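(* Let $A$ be an $n\times n$ array with exactly $\beta n^2$ distinct symbols. If row $i$ of $A$ contains $d\ge 1$ cells whose symbols are clones, then there is a cell $(i,j)$ in row $i$ whose symbol $A_{ij}$ is a clone and such that $$|R_i(A)\cup C_j(A)|\ \ge\ |R_i(A)|+\frac{\beta n^2-(n-d)(n-1)-|R_i(A)|}{d}.$$
   Context: An $n\times n$ array has a symbol in each cell (symbols may repeat arbitrarily). A symbol is a singleton if it occurs exactly once in the array and a clone otherwise; we say $A_{ij}$ is a clone (singleton) if the symbol in cell $(i,j)$ is a clone (singleton). $R_i(A)$ and $C_j(A)$ denote the sets of symbols occurring in row $i$ and column $j$ of $A$, respectively. *)

theory Defs
  imports Complex_Main
begin

text \<open>An n x n array is modelled as a function A :: nat => nat => 'a, of which only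
the entries A i j with i < n and j < n are relevant.\<close>

definition cells :: "nat \<Rightarrow> (nat \<times> nat) set" where
  "cells n = {0..<n} \<times> {0..<n}"

definition symbols :: "nat \<Rightarrow> (nat \<Rightarrow> nat \<Rightarrow> 'a) \<Rightarrow> 'a set" where
  "symbols n A = (\<lambda>(i, j). A i j) ` cells n"

definition occurrences :: "nat \<Rightarrow> (nat \<Rightarrow> nat \<Rightarrow> 'a) \<Rightarrow> 'a \<Rightarrow> nat" where
  "occurrences n A s = card {(i, j) \<in> cells n. A i j = s}"

definition is_clone :: "nat \<Rightarrow> (nat \<Rightarrow> nat \<Rightarrow> 'a) \<Rightarrow> 'a \<Rightarrow> bool" where
  "is_clone n A s \<longleftrightarrow> occurrences n A s \<ge> 2"

definition is_singleton :: "nat \<Rightarrow> (nat \<Rightarrow> nat \<Rightarrow> 'a) \<Rightarrow> 'a \<Rightarrow> bool" where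
  "is_singleton n A s \<longleftrightarrow> occurrences n A s = 1"

definition row_syms :: "nat \<Rightarrow> (nat \<Rightarrow> nat \<Rightarrow> 'a) \<Rightarrow> nat \<Rightarrow> 'a set" where
  "row_syms n A i = (\<lambda>j. A i j) ` {0..<n}"

definition col_syms :: "nat \<Rightarrow> (nat \<Rightarrow> nat \<Rightarrow> 'a) \<Rightarrow> nat \<Rightarrow> 'a set" where
  "col_syms n A j = (\<lambda>i. A i j) ` {0..<n}"

end

theory Submission
  imports Defs
begin

text \<open>Every symbol outside row \<open>i\<close> is a "new" symbol of some column \<open>j\<close>, i.e. lies in
  \<open>C\<^sub>j(A) - R\<^sub>i(A)\<close>, and a column contributes at most \<open>n - 1\<close> new symbols. Bounding the
  contribution of the \<open>n - d\<close> columns meeting row \<open>i\<close> in a singleton by \<open>n - 1\<close> each, the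
  remaining \<open>d\<close> clone columns together contribute at least
  \<open>\<beta>n\<^sup>2 - (n - d)(n - 1) - |R\<^sub>i(A)|\<close> new symbols, so the one contributing most contributes at
  least the \<open>d\<close>-th part of this.\<close>

lemma card_Un_eq_card_plus_card_Diff:
  assumes "finite A" "finite B"
  shows "card (A \<union> B) = card A + card (B - A)"
proof -
  have "A \<union> B = A \<union> (B - A)" by blast
  then show ?thesis using assms card_Un_disjoint[of A "B - A"] by auto
qed

lemma finite_row_syms: "finite (row_syms n A i)"
  unfolding row_syms_def by simp

lemma finite_col_syms: "finite (col_syms n A j)"
  unfolding col_syms_def by simp

lemma symbols_eq_UN_col_syms: "symbols n A = (\<Union>j<n. col_syms n A j)"
  unfolding symbols_def col_syms_def cells_def by auto

lemma card_col_syms_Diff_row_syms_le: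
  assumes "i < n" "j < n"
  shows "card (col_syms n A j - row_syms n A i) \<le> n - 1"
proof -
  have "col_syms n A j - row_syms n A i \<subseteq> (\<lambda>k. A k j) ` ({0..<n} - {i})"
    unfolding col_syms_def row_syms_def using assms(2) by auto
  then have "card (col_syms n A j - row_syms n A i) \<le> card ((\<lambda>k. A k j) ` ({0..<n} - {i}))"
    by (intro card_mono) auto
  also have "\<dots> \<le> card ({0..<n} - {i})"
    by (rule card_image_le) simp
  finally show ?thesis using assms by simp
qed

lemma card_symbols_le_card_row_syms_plus_sum:
  "card (symbols n A) \<le> card (row_syms n A i) + (\<Sum>j<n. card (col_syms n A j - row_syms n A i))"
proof -
  have "symbols n A \<subseteq> row_syms n A i \<union> (\<Union>j<n. col_syms n A j - row_syms n A i)"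
    unfolding symbols_eq_UN_col_syms by blast
  then have "card (symbols n A) \<le> card (row_syms n A i \<union> (\<Union>j<n. col_syms n A j - row_syms n A i))"
    by (intro card_mono) (simp_all add: finite_row_syms finite_col_syms)
  also have "\<dots> \<le> card (row_syms n A i) + card (\<Union>j<n. col_syms n A j - row_syms n A i)"
    by (rule card_Un_le)
  also have "\<dots> \<le> card (row_syms n A i) + (\<Sum>j<n. card (col_syms n A j - row_syms n A i))"
    using card_UN_le[of "{..<n}" "\<lambda>j. col_syms n A j - row_syms n A i"] by simp
  finally show ?thesis .
qed

lemma exists_col_many_new_symbols:
  assumes "i < n" and D: "D \<subseteq> {..<n}" "D \<noteq> {}"
  obtains j where "j \<in> D"
    and "card (symbols n A) \<le> card (row_syms n A i) + card D * card (col_syms n A j - row_syms n A i)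
           + (n - card D) * (n - 1)"
proof -
  define new where "new j = card (col_syms n A j - row_syms n A i)" for j
  have "finite D" using D finite_subset by blast
  have "Max (new ` D) \<in> new ` D"
    using \<open>finite D\<close> D by (intro Max_in) auto
  then obtain j where "j \<in> D" and j_max: "new j = Max (new ` D)"
    by auto
  have "sum new D \<le> card D * new j"
    using sum_le_card_Max[OF \<open>finite D\<close>, of new] j_max by simp
  moreover have "sum new ({..<n} - D) \<le> (n - card D) * (n - 1)"
  proof -
    have "sum new ({..<n} - D) \<le> card ({..<n} - D) * (n - 1)"
      using sum_bounded_above[of "{..<n} - D" new "n - 1"]
        card_col_syms_Diff_row_syms_le[OF \<open>i < n\<close>, of _ A]
      unfolding new_def by force
    also have "card ({..<n} - D) = n - card D"
      using card_Diff_subset[OF \<open>finite D\<close> D(1)] by simp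
    finally show ?thesis .
  qed
  moreover have "sum new {..<n} = sum new D + sum new ({..<n} - D)"
    using sum.subset_diff[OF D(1), of new] by (simp add: add.commute)
  ultimately have "card (symbols n A) \<le> card (row_syms n A i) + card D * new j + (n - card D) * (n - 1)"
    using card_symbols_le_card_row_syms_plus_sum[of n A i] unfolding new_def by linarith
  with \<open>j \<in> D\<close> show ?thesis unfolding new_def by (rule that)
qed

theorem mainTheorem4:
  fixes A :: "nat \<Rightarrow> nat \<Rightarrow> 'a" and n i d :: nat and \<beta> :: real
  assumes "real (card (symbols n A)) = \<beta> * real n ^ 2"
    and "i < n"
    and "d = card {j \<in> {0..<n}. is_clone n A (A i j)}"
    and "d \<ge> 1"
  shows "\<exists>j<n. is_clone n A (A i j) \<and>
     real (card (row_syms n A i \<union> col_syms n A j)) \<ge>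
       real (card (row_syms n A i))
       + (\<beta> * real n ^ 2 - (real n - real d) * (real n - 1) - real (card (row_syms n A i))) / real d"
proof -
  define D where "D = {j \<in> {0..<n}. is_clone n A (A i j)}"
  define R where "R = row_syms n A i"
  have "D \<subseteq> {..<n}" "card D = d"
    using assms(3) unfolding D_def by auto
  moreover from \<open>card D = d\<close> have "D \<noteq> {}"
    using assms(4) by auto
  ultimately obtain j where "j \<in> D"
    and j: "card (symbols n A) \<le> card R + d * card (col_syms n A j - R) + (n - d) * (n - 1)"
    using exists_col_many_new_symbols[OF assms(2)] unfolding R_def by metis
  have "d \<le> n" using \<open>D \<subseteq> {..<n}\<close> \<open>card D = d\<close> card_mono[of "{..<n}" D] by simp
  then have "real (card (symbols n A))
      \<le> real (card R) + real d * real (card (col_syms n A j - R)) + (real n - real d) * (real n - 1)"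
    using of_nat_mono[OF j, where 'a = real] assms(2) by (simp add: of_nat_diff)
  then have "\<beta> * real n ^ 2 - (real n - real d) * (real n - 1) - real (card R)
      \<le> real d * real (card (col_syms n A j - R))"
    using assms(1) by linarith
  then have "(\<beta> * real n ^ 2 - (real n - real d) * (real n - 1) - real (card R)) / real d
      \<le> real (card (col_syms n A j - R))"
    using assms(4) by (simp add: divide_le_eq mult.commute)
  moreover have "card (R \<union> col_syms n A j) = card R + card (col_syms n A j - R)"
    unfolding R_def by (simp add: card_Un_eq_card_plus_card_Diff finite_row_syms finite_col_syms)
  ultimately show ?thesis
    using \<open>j \<in> D\<close> unfolding D_def R_def by (intro exI[of _ j]) auto
qed

end
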